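(* Let $n\ge2$, $\varepsilon>0$, and let $v\in C^2(\mathscr{S}_\varepsilon)\cap C^1(\overline{\mathscr{S}_\varepsilon})$ be the solution of the boundary value problem $$\mathscr{L}v=R \ \text{ in } \mathscr{S}_\varepsilon,\qquad v=0 \ \text{ on } \partial\mathscr{S}_\varepsilon,\qquad\text{where } R(x)=\frac{2n}{|x|^2+n}-\frac{2|x|^2}{(|x|^2+n)^2}.$$ Then $$\int |\nabla v|^2 \, \mathrm{d}\gamma_{\mathscr{S}_{\varepsilon}} \le 36\, e^{\varepsilon^2/2}\, \varepsilon^2.$$
   Context: $\gamma_n$ is the standard Gaussian measure on $\mathbb R^n$ with density $(2\pi)^{-n/2}e^{-|x|^2/2}$, and $\gamma_S(A)=\gamma_n(A\cap S)/\gamma_n(S)$. $\mathscr{L}v=\Delta v-\sum_i x_i\partial_iv$. Writing $x=(x_1,x')$ with $x'\in\mathbb R^{n-1}$, $\mathscr{S}_{\varepsilon}=\{x\in\mathbb R^n:\ |x_1|<\varepsilon,\ |x'|^2<2n\}$. *)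

theory Defs
  imports "HOL-Analysis.Analysis"
begin

definition gauss_density :: "real ^ 'n \<Rightarrow> real" where
  "gauss_density x = (2 * pi) powr (- real CARD('n) / 2) * exp (- (norm x)\<^sup>2 / 2)"

definition gaussian_measure :: "(real ^ 'n) measure" where
  "gaussian_measure = density lborel (\<lambda>x. ennreal (gauss_density x))"

text \<open>Integral with respect to the conditioned measure gamma_S = gamma_n(. \<inter> S)/gamma_n(S).\<close>
definition gauss_cond_integral :: "(real ^ 'n) set \<Rightarrow> (real ^ 'n \<Rightarrow> real) \<Rightarrow> real" where
  "gauss_cond_integral S f =
     (set_lebesgue_integral gaussian_measure S f) / measure gaussian_measure S"

text \<open>The slab S_eps; coordinate k plays the role of x_1, the others form x'.\<close>
definition slab :: "'n \<Rightarrow> real \<Rightarrow> (real ^ 'n) set" where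
  "slab k \<epsilon> = {x. \<bar>x $ k\<bar> < \<epsilon> \<and> (\<Sum>i\<in>UNIV - {k}. (x $ i)\<^sup>2) < 2 * real CARD('n)}"

definition R_fun :: "real ^ 'n \<Rightarrow> real" where
  "R_fun x = 2 * real CARD('n) / ((norm x)\<^sup>2 + real CARD('n))
             - 2 * (norm x)\<^sup>2 / ((norm x)\<^sup>2 + real CARD('n))\<^sup>2"

end

theory Submission
  imports Defs
begin

text \<open>Integrating the equation against \<open>\<psi>(v) \<gamma>\<close>, where \<open>\<psi>\<close> is a \<open>C\<^sup>1\<close> truncation of the
  identity vanishing near \<open>0\<close>, gives \<open>\<integral> \<psi>'(v) |\<nabla>v|\<^sup>2 d\<gamma> = - \<integral> \<psi>(v) R d\<gamma>\<close>. By the maximum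
  principle \<open>v < 0\<close>, and as \<open>0 < R \<le> 2\<close> the right-hand side is controlled by \<open>\<integral> \<psi>(v)\<^sup>2\<close>.
  That in turn is bounded by integrating \<open>\<partial>\<^sub>1 (x\<^sub>1 \<psi>(v)\<^sup>2 \<gamma> e\<^bsup>x\<^sub>1\<^sup>2/2\<^esup>)\<close> over the slab: a
  Poincare inequality across the thin direction, which costs the factor \<open>\<epsilon>\<^sup>2 e\<^bsup>\<epsilon>\<^sup>2/2\<^esup>\<close>.
  Young's inequality closes the estimate, and letting \<open>\<psi> \<rightarrow> id\<close> gives the bound with
  constant \<open>16\<close>.\<close>

lemma integrable_bounded_support:
  fixes f :: "'a::euclidean_space \<Rightarrow> real"
  assumes "f \<in> borel_measurable borel" and "\<And>x. \<bar>f x\<bar> \<le> C"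
    and "\<And>x. norm x > r \<Longrightarrow> f x = 0"
  shows "integrable lborel f"
proof (rule Bochner_Integration.integrable_bound)
  show "integrable lborel (\<lambda>x. C * indicator (cball (0::'a) r) x)"
    using emeasure_lborel_cball_finite[of "0::'a" r]
    by (intro integrable_mult_right integrable_real_indicator) auto
  show "AE x in lborel. norm (f x) \<le> norm (C * indicator (cball 0 r) x)"
  proof (intro AE_I2)
    fix x :: 'a
    show "norm (f x) \<le> norm (C * indicator (cball 0 r) x)"
      using assms(2)[of x] assms(3)[of x] by (cases "norm x \<le> r") (auto simp: indicator_def)
  qed
qed (use assms(1) in simp)

lemma lborel_integral_translate:
  fixes f :: "'a::euclidean_space \<Rightarrow> real"
  assumes "f \<in> borel_measurable borel"
  shows "(\<integral>x. f (c + x) \<partial>lborel) = integral\<^sup>L lborel f"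
proof -
  have "integral\<^sup>L lborel f = integral\<^sup>L (distr lborel borel ((+) c)) f"
    by (simp add: lborel_distr_plus)
  also have "\<dots> = (\<integral>x. f (c + x) \<partial>lborel)"
    by (rule integral_distr) (use assms in auto)
  finally show ?thesis ..
qed

text \<open>The difference quotients along \<open>e\<close> have zero integral by translation invariance, are
  bounded by the mean value theorem and converge pointwise to \<open>f\<close>.\<close>
lemma integral_directional_derivative_eq_0:
  fixes F f :: "'a::euclidean_space \<Rightarrow> real" and e :: 'a
  assumes F_meas: "F \<in> borel_measurable borel" and f_meas: "f \<in> borel_measurable borel"
    and F_supp: "\<And>x. norm x > r \<Longrightarrow> F x = 0" and F_bound: "\<And>x. \<bar>F x\<bar> \<le> C"
    and deriv: "\<And>x. ((\<lambda>t. F (x + t *\<^sub>R e)) has_real_derivative f x) (at 0)"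
    and f_bound: "\<And>x. \<bar>f x\<bar> \<le> M"
  shows "integrable lborel f" and "integral\<^sup>L lborel f = 0"
proof -
  define h :: "nat \<Rightarrow> real" where "h m = inverse (real (Suc m))" for m
  have h_pos: "h m > 0" and h_le_1: "h m \<le> 1" for m
    unfolding h_def by (simp_all add: field_simps)
  define q where "q m x = (F (x + h m *\<^sub>R e) - F x) / h m" for m x
  have deriv_at: "((\<lambda>t. F (x + t *\<^sub>R e)) has_real_derivative f (x + t *\<^sub>R e)) (at t)" for x t
    using deriv[of "x + t *\<^sub>R e"] DERIV_shift[of "\<lambda>u. F (x + u *\<^sub>R e)" "f (x + t *\<^sub>R e)" 0 t]
    by (simp add: algebra_simps)
  have q_bound: "\<bar>q m x\<bar> \<le> M" for m x
  proof -
    obtain z where "F (x + h m *\<^sub>R e) - F (x + 0 *\<^sub>R e) = (h m - 0) * f (x + z *\<^sub>R e)"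
      using MVT2[of 0 "h m" "\<lambda>t. F (x + t *\<^sub>R e)" "\<lambda>t. f (x + t *\<^sub>R e)"] h_pos deriv_at by blast
    then have "q m x = f (x + z *\<^sub>R e)"
      unfolding q_def using h_pos[of m] by simp
    then show ?thesis using f_bound by simp
  qed
  have shift_supp: "F (x + h m *\<^sub>R e) = 0" if "norm x > r + norm e" for m x
  proof -
    have "norm (h m *\<^sub>R e) \<le> norm e"
      using h_le_1[of m] h_pos[of m] by (simp add: mult_left_le_one_le)
    then have "norm (x + h m *\<^sub>R e) > r"
      using that norm_triangle_ineq2[of x "- (h m *\<^sub>R e)"] by simp
    then show ?thesis using F_supp by simp
  qed
  have q_supp: "q m x = 0" if "norm x > r + norm e" for m x
    using that shift_supp F_supp[of x] norm_ge_zero[of e] unfolding q_def by simp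
  have q_meas: "q m \<in> borel_measurable borel" for m
    unfolding q_def by (intro borel_measurable_divide borel_measurable_diff)
      (auto intro!: measurable_compose[OF _ F_meas])
  have q_lim: "(\<lambda>m. q m x) \<longlonglongrightarrow> f x" for x
  proof -
    have "((\<lambda>t. (F (x + t *\<^sub>R e) - F x) / t) \<longlongrightarrow> f x) (at 0)"
      using deriv[of x] unfolding DERIV_def by simp
    moreover have "filterlim h (at 0) sequentially"
      unfolding h_def using LIMSEQ_inverse_real_of_nat
      by (auto simp: filterlim_at simp del: of_nat_Suc)
    ultimately show ?thesis
      unfolding q_def by (rule filterlim_compose[unfolded o_def])
  qed
  have q_integral: "integral\<^sup>L lborel (q m) = 0" for m
  proof -
    have F_int: "integrable lborel F"
      by (rule integrable_bounded_support[OF F_meas F_bound F_supp])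
    have "integrable lborel (\<lambda>x. F (h m *\<^sub>R e + x))"
      by (rule integrable_bounded_support[where C = C and r = "r + norm e"])
        (auto intro!: measurable_compose[OF _ F_meas] F_bound shift_supp simp: add.commute)
    moreover have "(\<integral>x. F (h m *\<^sub>R e + x) \<partial>lborel) = integral\<^sup>L lborel F"
      by (rule lborel_integral_translate[OF F_meas])
    ultimately show ?thesis
      unfolding q_def using F_int by (simp add: add.commute)
  qed
  define w where "w x = M * indicator (cball (0::'a) (r + norm e)) x" for x
  have w_int: "integrable lborel w"
    unfolding w_def using emeasure_lborel_cball_finite[of "0::'a" "r + norm e"]
    by (intro integrable_mult_right integrable_real_indicator) auto
  have q_dom: "\<bar>q m x\<bar> \<le> w x" for m x
    using q_bound[of m x] q_supp[of x m] unfolding w_def by (auto simp: indicator_def)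
  show f_int: "integrable lborel f"
    by (rule integrable_dominated_convergence[where s = q and w = w])
      (auto simp: f_meas q_meas w_int q_lim q_dom)
  have "(\<lambda>m. integral\<^sup>L lborel (q m)) \<longlonglongrightarrow> integral\<^sup>L lborel f"
    by (rule integral_dominated_convergence[where s = q and w = w])
      (auto simp: f_meas q_meas w_int q_lim q_dom)
  then show "integral\<^sup>L lborel f = 0"
    using q_integral by (simp add: LIMSEQ_const_iff)
qed

lemma has_real_derivative_along_line:
  fixes f :: "'a::real_inner \<Rightarrow> real"
  assumes "(f has_derivative (\<lambda>h. D \<bullet> h)) (at (x + t *\<^sub>R e))"
  shows "((\<lambda>s. f (x + s *\<^sub>R e)) has_real_derivative D \<bullet> e) (at t)"
proof -
  have "((\<lambda>s. x + s *\<^sub>R e) has_derivative (\<lambda>s. s *\<^sub>R e)) (at t)"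
    by (auto intro!: derivative_eq_intros)
  from has_derivative_compose[OF this assms]
  show ?thesis
    by (rule has_derivative_imp_has_field_derivative) (simp add: mult.commute)
qed

lemma has_real_derivative_along_line_component:
  fixes F :: "real^'n \<Rightarrow> real^'m"
  assumes "(F has_derivative (\<lambda>h. A *v h)) (at (x + t *\<^sub>R e))"
  shows "((\<lambda>s. F (x + s *\<^sub>R e) $ j) has_real_derivative (A *v e) $ j) (at t)"
proof -
  have "((\<lambda>s. x + s *\<^sub>R e) has_derivative (\<lambda>s. s *\<^sub>R e)) (at t)"
    by (auto intro!: derivative_eq_intros)
  from has_derivative_compose[OF this assms]
  have "((\<lambda>s. F (x + s *\<^sub>R e) $ j) has_derivative (\<lambda>s. (A *v (s *\<^sub>R e)) $ j)) (at t)"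
    by (rule bounded_linear.has_derivative[OF bounded_linear_vec_nth])
  then show ?thesis
    by (rule has_derivative_imp_has_field_derivative)
      (simp add: matrix_vector_mult_def sum_distrib_left algebra_simps)
qed

lemma inner_axis_one: "(x::real^'n) \<bullet> axis i 1 = x $ i"
  using inner_axis'[of i 1 x] by (simp add: inner_commute)

lemma matrix_vector_mult_axis_one: "((A::real^'n^'m) *v axis i 1) $ j = A $ j $ i"
  by (simp add: matrix_vector_mult_def axis_def if_distrib cong: if_cong)

lemma norm_add_axis_power2:
  "(norm (x + t *\<^sub>R axis i 1))\<^sup>2 = (norm (x::real^'n))\<^sup>2 + 2 * t * x $ i + t\<^sup>2"
  unfolding power2_norm_eq_inner
  by (simp add: inner_add inner_axis_one inner_commute[of "axis i 1"] algebra_simps power2_eq_square)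

lemma norm_power2_eq_sum: "(norm (x::real^'n))\<^sup>2 = (\<Sum>i\<in>UNIV. (x $ i)\<^sup>2)"
  by (simp only: power2_norm_eq_inner) (simp add: inner_vec_def power2_eq_square)

lemma norm_power2_split: "(norm (x::real^'n))\<^sup>2 = (x $ k)\<^sup>2 + (\<Sum>i\<in>UNIV - {k}. (x $ i)\<^sup>2)"
  unfolding norm_power2_eq_sum by (simp add: sum.remove)

lemma R_fun_pos: "R_fun (x::real^'n) > 0"
  and R_fun_le_2: "R_fun (x::real^'n) \<le> 2"
proof -
  define a where "a = (norm x)\<^sup>2"
  define n where "n = real CARD('n)"
  have a: "a \<ge> 0" and n: "n \<ge> 1"
    unfolding a_def n_def by simp_all
  have R: "R_fun x = 2 * n / (a + n) - 2 * a / (a + n)\<^sup>2"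
    unfolding R_fun_def a_def n_def ..
  have an: "a + n > 0" using a n by simp
  have "a \<le> n * a" and "n * n > 0"
    using a n mult_right_mono[of 1 n a] by simp_all
  then have "2 * a < 2 * n * (a + n)"
    by (simp add: algebra_simps)
  then have "2 * a / (a + n)\<^sup>2 < 2 * n * (a + n) / (a + n)\<^sup>2"
    using an by (intro divide_strict_right_mono) auto
  also have "\<dots> = 2 * n / (a + n)"
    using an by (simp add: power2_eq_square)
  finally show "R_fun x > 0" using R by simp
  have "2 * n / (a + n) \<le> 2" and "2 * a / (a + n)\<^sup>2 \<ge> 0"
    using a n by (simp_all add: field_simps)
  then show "R_fun x \<le> 2" using R by linarith
qed

definition sq_pos_part :: "real \<Rightarrow> real" where
  "sq_pos_part y = (max 0 y)\<^sup>2"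

lemma has_real_derivative_sq_pos_part: "(sq_pos_part has_real_derivative 2 * max 0 y) (at y)"
proof (cases y "0::real" rule: linorder_cases)
  case less
  have "\<forall>\<^sub>F z in nhds y. 0 = sq_pos_part z"
    using eventually_nhds_in_open[of "{..<0}" y] less
    by (auto elim!: eventually_mono simp: sq_pos_part_def)
  then show ?thesis
    using less by (subst DERIV_cong_ev[symmetric, where f = "\<lambda>z. 0"]) auto
next
  case equal
  have "((\<lambda>h. (sq_pos_part (0 + h) - sq_pos_part 0) / h) \<longlongrightarrow> 0) (at 0)"
  proof (rule Lim_null_comparison)
    show "\<forall>\<^sub>F h in at 0. norm ((sq_pos_part (0 + h) - sq_pos_part 0) / h) \<le> norm h"
      by (intro always_eventually allI)
        (auto simp: sq_pos_part_def power2_eq_square abs_mult divide_simps max_def)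
  qed (intro tendsto_eq_intros; simp)
  then show ?thesis using equal by (simp add: DERIV_def)
next
  case greater
  have "((\<lambda>z. z\<^sup>2) has_real_derivative 2 * y) (at y)"
    by (auto intro!: derivative_eq_intros)
  moreover have "\<forall>\<^sub>F z in nhds y. z\<^sup>2 = sq_pos_part z"
    using eventually_nhds_in_open[of "{0<..}" y] greater
    by (auto elim!: eventually_mono simp: sq_pos_part_def)
  ultimately show ?thesis
    using greater by (subst DERIV_cong_ev[symmetric, where f = "\<lambda>z. z\<^sup>2"]) auto
qed

text \<open>\<open>cutoff d\<close> is \<open>C\<^sup>1\<close>, vanishes on \<open>[-d, \<infinity>)\<close> and equals \<open>s + 3d/2\<close> on \<open>(-\<infinity>, -2d]\<close>.
  Composed with the negative solution it gives test functions compactly supported in the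
  slab, with \<open>cutoff' d v \<rightarrow> 1\<close> as \<open>d \<rightarrow> 0\<close>.\<close>
definition cutoff :: "real \<Rightarrow> real \<Rightarrow> real" where
  "cutoff d s = (sq_pos_part (- s - 2 * d) - sq_pos_part (- s - d)) / (2 * d)"

definition cutoff' :: "real \<Rightarrow> real \<Rightarrow> real" where
  "cutoff' d s = (max 0 (- s - d) - max 0 (- s - 2 * d)) / d"

lemma has_real_derivative_cutoff:
  assumes "d > 0"
  shows "(cutoff d has_real_derivative cutoff' d s) (at s)"
proof -
  have shifted: "((\<lambda>s. sq_pos_part (- s - c)) has_real_derivative 2 * max 0 (- s - c) * (- 1)) (at s)"
    for c
    by (rule DERIV_chain2[OF has_real_derivative_sq_pos_part]) (auto intro!: derivative_eq_intros)
  have "(cutoff d has_real_derivative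
      (2 * max 0 (- s - 2 * d) * (- 1) - 2 * max 0 (- s - d) * (- 1)) / (2 * d)) (at s)"
    unfolding cutoff_def[abs_def] by (intro DERIV_cdivide DERIV_diff shifted)
  moreover have "(2 * a * (- 1) - 2 * b * (- 1)) / (2 * d) = (b - a) / d" for a b :: real
    using assms by (simp add: field_simps)
  ultimately show ?thesis
    unfolding cutoff'_def by simp
qed

lemma continuous_on_cutoff: "d > 0 \<Longrightarrow> continuous_on A (cutoff d)"
  by (meson DERIV_isCont continuous_at_imp_continuous_on has_real_derivative_cutoff)

lemma continuous_on_cutoff': "d > 0 \<Longrightarrow> continuous_on A (cutoff' d)"
  unfolding cutoff'_def[abs_def] by (intro continuous_intros) auto

lemma cutoff'_nonneg: "d > 0 \<Longrightarrow> 0 \<le> cutoff' d s"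
  and cutoff'_le_1: "d > 0 \<Longrightarrow> cutoff' d s \<le> 1"
  unfolding cutoff'_def by (auto simp: max_def field_simps)

lemma cutoff_eq_0: "d > 0 \<Longrightarrow> - d < s \<Longrightarrow> cutoff d s = 0"
  unfolding cutoff_def sq_pos_part_def by (auto simp: max_def)

lemma cutoff'_eq_0: "d > 0 \<Longrightarrow> - d < s \<Longrightarrow> cutoff' d s = 0"
  unfolding cutoff'_def by (auto simp: max_def)

lemma cutoff'_eq_1: "d > 0 \<Longrightarrow> s \<le> - 2 * d \<Longrightarrow> cutoff' d s = 1"
  unfolding cutoff'_def by (auto simp: max_def field_simps)

lemma cutoff_nonpos_bounds:
  assumes d: "d > 0" and s: "s \<le> 0"
  shows "s \<le> cutoff d s" and "cutoff d s \<le> 0"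
proof -
  consider "- d < s" | "- 2 * d \<le> s" "s \<le> - d" | "s < - 2 * d"
    by linarith
  then have "s \<le> cutoff d s \<and> cutoff d s \<le> 0"
  proof cases
    case 1
    then show ?thesis
      using s d unfolding cutoff_def sq_pos_part_def by (auto simp: max_def)
  next
    case 2
    define y where "y = - s - d"
    have y: "0 \<le> y" "y \<le> d"
      using 2 unfolding y_def by auto
    have cutoff_y: "cutoff d s = - (y\<^sup>2) / (2 * d)"
      using 2 unfolding cutoff_def sq_pos_part_def y_def
      by (cases "s = - 2 * d") (auto simp: max_def)
    have "y\<^sup>2 \<le> d * y"
      using y by (simp add: power2_eq_square mult_right_mono)
    also have "\<dots> \<le> 2 * d * (d + y)"
      using y d by (simp add: algebra_simps)
    finally have "y\<^sup>2 / (2 * d) \<le> d + y"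
      using d by (simp add: divide_simps mult.commute)
    then show ?thesis
      using cutoff_y d unfolding y_def by simp
  next
    case 3
    have "cutoff d s = ((- s - 2 * d)\<^sup>2 - (- s - d)\<^sup>2) / (2 * d)"
      using 3 d unfolding cutoff_def sq_pos_part_def by (simp add: max_def)
    also have "\<dots> = s + 3 * d / 2"
      using d by (simp add: field_simps power2_eq_square)
    finally show ?thesis using 3 d by simp
  qed
  then show "s \<le> cutoff d s" and "cutoff d s \<le> 0" by simp_all
qed

lemma gauss_density_pos: "gauss_density x > 0"
  unfolding gauss_density_def by simp

lemma continuous_on_gauss_density: "continuous_on A gauss_density"
  unfolding gauss_density_def[abs_def] by (intro continuous_intros) auto

lemma has_real_derivative_gauss_density_axis:
  fixes x :: "real^'n"
  shows "((\<lambda>t. gauss_density (x + t *\<^sub>R axis i 1)) has_real_derivative - (x $ i) * gauss_density x) (at 0)"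
proof -
  define c where "c = (2 * pi) powr (- real CARD('n) / 2)"
  have along_axis: "gauss_density (x + t *\<^sub>R axis i 1) = c * exp (- ((norm x)\<^sup>2 + 2 * t * x $ i + t\<^sup>2) / 2)"
    for t
    unfolding gauss_density_def c_def norm_add_axis_power2 ..
  have "((\<lambda>t. c * exp (- ((norm x)\<^sup>2 + 2 * t * x $ i + t\<^sup>2) / 2)) has_real_derivative
      c * (exp (- ((norm x)\<^sup>2 + 2 * 0 * x $ i + 0\<^sup>2) / 2) * (- (2 * x $ i + 2 * 0) / 2))) (at 0)"
    by (auto intro!: derivative_eq_intros)
  then show ?thesis
    unfolding along_axis by (simp add: gauss_density_def c_def mult_ac)
qed

definition gauss_transverse :: "'n \<Rightarrow> real^'n \<Rightarrow> real" where
  "gauss_transverse k x = gauss_density x * exp ((x $ k)\<^sup>2 / 2)"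

lemma gauss_transverse_add_axis: "gauss_transverse k (x + t *\<^sub>R axis k 1) = gauss_transverse k x"
proof -
  have "- (norm (x + t *\<^sub>R axis k 1))\<^sup>2 / 2 + ((x + t *\<^sub>R axis k 1) $ k)\<^sup>2 / 2
      = - (norm x)\<^sup>2 / 2 + (x $ k)\<^sup>2 / 2"
    unfolding norm_add_axis_power2 by (simp add: field_simps power2_eq_square)
  then show ?thesis
    unfolding gauss_transverse_def gauss_density_def by (simp add: exp_add[symmetric] algebra_simps)
qed

lemma gauss_transverse_ge: "gauss_density x \<le> gauss_transverse k x"
  unfolding gauss_transverse_def using gauss_density_pos[of x] by simp

lemma gauss_transverse_le_exp: "\<bar>x $ k\<bar> \<le> e \<Longrightarrow> gauss_transverse k x \<le> gauss_density x * exp (e\<^sup>2 / 2)"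
  unfolding gauss_transverse_def using gauss_density_pos[of x]
  by (intro mult_left_mono) (auto simp: abs_le_square_iff[symmetric])

lemma continuous_on_gauss_transverse: "continuous_on A (gauss_transverse k)"
  unfolding gauss_transverse_def[abs_def] by (intro continuous_intros continuous_on_gauss_density) auto

lemma gauss_cond_integral_eq_lborel:
  fixes S :: "(real^'n) set"
  assumes S: "S \<in> sets borel" and f: "(\<lambda>x. indicator S x * f x) \<in> borel_measurable borel"
    and G_int: "integrable lborel (\<lambda>x. indicator S x * gauss_density x)"
  shows "gauss_cond_integral S f =
    (\<integral>x. indicator S x * (gauss_density x * f x) \<partial>lborel) / (\<integral>x. indicator S x * gauss_density x \<partial>lborel)"
proof -
  have g_meas: "(\<lambda>x. ennreal (gauss_density x)) \<in> borel_measurable lborel"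
    using continuous_on_gauss_density[of UNIV]
    by (intro measurable_compose[OF _ measurable_ennreal]) (auto intro: borel_measurable_continuous_onI)
  have "set_lebesgue_integral gaussian_measure S f
      = (\<integral>x. gauss_density x *\<^sub>R (indicator S x *\<^sub>R f x) \<partial>lborel)"
    unfolding set_lebesgue_integral_def gaussian_measure_def using f g_meas
    by (intro integral_density) (auto simp: less_imp_le[OF gauss_density_pos])
  also have "\<dots> = (\<integral>x. indicator S x * (gauss_density x * f x) \<partial>lborel)"
    by (simp add: mult_ac)
  finally have num: "set_lebesgue_integral gaussian_measure S f = \<dots>" .
  have "emeasure gaussian_measure S = (\<integral>\<^sup>+ x. ennreal (gauss_density x) * indicator S x \<partial>lborel)"
    unfolding gaussian_measure_def using S by (intro emeasure_density g_meas) simp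
  also have "\<dots> = (\<integral>\<^sup>+ x. ennreal (indicator S x * gauss_density x) \<partial>lborel)"
    by (intro nn_integral_cong) (auto simp: indicator_def)
  also have "\<dots> = ennreal (\<integral>x. indicator S x * gauss_density x \<partial>lborel)"
    by (intro nn_integral_eq_integral G_int AE_I2) (auto simp: indicator_def less_imp_le[OF gauss_density_pos])
  finally have den: "measure gaussian_measure S = (\<integral>x. indicator S x * gauss_density x \<partial>lborel)"
    unfolding measure_def
    by (simp add: integral_nonneg_AE AE_I2 indicator_def less_imp_le[OF gauss_density_pos])
  show ?thesis
    unfolding gauss_cond_integral_def num den ..
qed

text \<open>Pointwise form of the energy estimate: with \<open>g = \<gamma>\<close>, \<open>H = gauss_transverse k\<close>,
  \<open>p = cutoff' d v\<close>, \<open>w = |\<nabla>v|\<^sup>2\<close>, \<open>u = cutoff d v\<close>, \<open>a = \<partial>\<^sub>kv\<close>, the two middle terms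
  are the integrands of the two vanishing integrals. It is two applications of
  Young's inequality, using \<open>R \<le> 2\<close> and \<open>H \<le> g e\<^sup>\<epsilon>\<^sup>\<^sup>2\<^sup>/\<^sup>2\<close> on the slab.\<close>
lemma energy_pointwise_bound:
  fixes g H p w u a y R B e :: real
  assumes g: "g > 0" and H: "g \<le> H" "H \<le> g * exp (e\<^sup>2 / 2)"
    and p: "0 \<le> p" "p \<le> 1" and a: "a\<^sup>2 \<le> w" and u: "u \<le> 0" and y: "y\<^sup>2 \<le> e\<^sup>2"
    and R: "R \<le> 2" and B: "B = 4 * e\<^sup>2 * exp (e\<^sup>2 / 2)" and e: "e > 0"
  shows "g * (p * w) \<le> g * (p * w + u * R) + (u\<^sup>2 * H + 2 * y * u * p * a * H) / B
    + g * (p * w) / 2 + 2 * B * g"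
proof -
  have B_pos: "B > 0" using B e by simp
  have w: "w \<ge> 0" using a by (meson order_trans zero_le_power2)
  have "- (u * R) \<le> - (u * 2)" using mult_left_mono_neg[OF R u] by simp
  moreover have "(u + 2 * B)\<^sup>2 / (2 * B) = u\<^sup>2 / (2 * B) + 2 * u + 2 * B"
    using B_pos by (simp add: field_simps power2_eq_square)
  moreover have "(u + 2 * B)\<^sup>2 / (2 * B) \<ge> 0" using B_pos by simp
  ultimately have "- (u * R) \<le> u\<^sup>2 / (2 * B) + 2 * B" by linarith
  then have young_R: "- (g * u * R) \<le> H * (u\<^sup>2 / (2 * B)) + 2 * B * g"
    using mult_left_mono[of _ _ g] mult_right_mono[OF H(1), of "u\<^sup>2 / (2 * B)"] g B_pos
    by (fastforce simp: algebra_simps)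
  define c where "c = y * p * a"
  have "- (2 * u * c) \<le> u\<^sup>2 / 2 + 2 * c\<^sup>2"
    using zero_le_power2[of "u + 2 * c"] by (simp add: power2_eq_square algebra_simps)
  moreover have "c\<^sup>2 \<le> e\<^sup>2 * (p * w)"
  proof -
    have "p\<^sup>2 * a\<^sup>2 \<le> p * w"
      using p a by (intro mult_mono) (auto simp: power2_eq_square mult_left_le)
    then show ?thesis
      unfolding c_def power_mult_distrib using y p w
      by (simp add: mult.assoc mult_mono)
  qed
  ultimately have "- (2 * u * c) * H \<le> (u\<^sup>2 / 2 + 2 * (e\<^sup>2 * (p * w))) * H"
    using g H(1) by (intro mult_right_mono) auto
  moreover have "2 * (e\<^sup>2 * (p * w)) * H \<le> B / 2 * (g * (p * w))"
    using mult_left_mono[OF H(2), of "2 * (e\<^sup>2 * (p * w))"] p w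
    by (simp add: B algebra_simps)
  ultimately have "u\<^sup>2 * H / 2 \<le> (u\<^sup>2 * H + 2 * y * u * p * a * H) + B / 2 * (g * (p * w))"
    unfolding c_def by (simp add: algebra_simps)
  then have young_a: "H * (u\<^sup>2 / (2 * B)) \<le> (u\<^sup>2 * H + 2 * y * u * p * a * H) / B + g * (p * w) / 2"
    using B_pos by (simp add: field_simps)
  show ?thesis
    using young_R young_a by (simp add: algebra_simps)
qed

lemma eventually_nhds_0_along_line:
  fixes x e :: "'a::real_normed_vector"
  assumes "eventually P (nhds x)"
  shows "\<forall>\<^sub>F t in nhds 0. P (x + t *\<^sub>R e)"
proof -
  have "((\<lambda>t. x + t *\<^sub>R e) \<longlongrightarrow> x + 0 *\<^sub>R e) (nhds 0)"
    by (intro tendsto_intros filterlim_ident)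
  then show ?thesis
    using eventually_compose_filterlim[OF assms] by simp
qed

locale slab_bvp =
  fixes v :: "real ^ 'n \<Rightarrow> real"
    and Dv :: "real ^ 'n \<Rightarrow> real ^ 'n"
    and D2v :: "real ^ 'n \<Rightarrow> real ^ 'n ^ 'n"
    and k :: 'n and \<epsilon> :: real
  assumes eps: "\<epsilon> > 0"
    and cont_v: "continuous_on (closure (slab k \<epsilon>)) v"
    and grad: "\<And>x. x \<in> slab k \<epsilon> \<Longrightarrow> (v has_derivative (\<lambda>h. Dv x \<bullet> h)) (at x)"
    and cont_grad: "continuous_on (closure (slab k \<epsilon>)) Dv"
    and hess: "\<And>x. x \<in> slab k \<epsilon> \<Longrightarrow> (Dv has_derivative (\<lambda>h. D2v x *v h)) (at x)"
    and cont_hess: "continuous_on (slab k \<epsilon>) D2v"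
    and pde: "\<And>x. x \<in> slab k \<epsilon> \<Longrightarrow>
               (\<Sum>i\<in>UNIV. D2v x $ i $ i) - (\<Sum>i\<in>UNIV. x $ i * Dv x $ i) = R_fun x"
    and bdry: "\<And>x. x \<in> frontier (slab k \<epsilon>) \<Longrightarrow> v x = 0"
begin

abbreviation S where "S \<equiv> slab k \<epsilon>"

lemma open_slab: "open S"
  unfolding slab_def by (intro open_Collect_conj open_Collect_less continuous_intros)

lemma zero_in_slab: "0 \<in> S"
  unfolding slab_def using eps by simp

lemma slab_subset_ball: "S \<subseteq> ball 0 (sqrt (\<epsilon>\<^sup>2 + 2 * real CARD('n)))"
proof
  fix x assume x: "x \<in> S"
  then have "(x $ k)\<^sup>2 < \<epsilon>\<^sup>2"
    unfolding slab_def using power_strict_mono[of "\<bar>x $ k\<bar>" \<epsilon> 2] by simp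
  then have "(norm x)\<^sup>2 < \<epsilon>\<^sup>2 + 2 * real CARD('n)"
    using x unfolding slab_def norm_power2_split[of x k] by simp
  then show "x \<in> ball 0 (sqrt (\<epsilon>\<^sup>2 + 2 * real CARD('n)))"
    by (simp add: real_less_rsqrt)
qed

lemma bounded_slab: "bounded S"
  using slab_subset_ball bounded_ball bounded_subset by blast

lemma compact_closure_slab: "compact (closure S)"
  using bounded_slab by (simp add: compact_eq_bounded_closed bounded_closure)

lemma frontier_slab: "frontier S = closure S - S"
  by (simp add: frontier_def interior_open[OF open_slab])

lemma continuous_on_Dv: "continuous_on S Dv"
  using continuous_on_subset[OF cont_grad closure_subset] .

lemma has_real_derivative_v_axis:
  "x \<in> S \<Longrightarrow> ((\<lambda>t. v (x + t *\<^sub>R axis i 1)) has_real_derivative Dv x $ i) (at 0)"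
  using has_real_derivative_along_line[of v "Dv x" x 0 "axis i 1"] grad[of x]
  by (simp add: inner_axis_one)

lemma has_real_derivative_Dv_axis:
  "x \<in> S \<Longrightarrow> ((\<lambda>t. Dv (x + t *\<^sub>R axis i 1) $ j) has_real_derivative D2v x $ j $ i) (at 0)"
  using has_real_derivative_along_line_component[of Dv "D2v x" x 0 "axis i 1" j] hess[of x]
  by (simp add: matrix_vector_mult_axis_one)

lemma has_real_derivative_cutoff_v_axis:
  "d > 0 \<Longrightarrow> x \<in> S \<Longrightarrow>
    ((\<lambda>t. cutoff d (v (x + t *\<^sub>R axis i 1))) has_real_derivative cutoff' d (v x) * Dv x $ i) (at 0)"
  using DERIV_chain2[OF has_real_derivative_cutoff has_real_derivative_v_axis] by simp

text \<open>Maximum principle: at an interior maximum \<open>\<nabla>v = 0\<close>, so the equation gives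
  \<open>\<Delta>v = R > 0\<close>, and \<open>v\<close> increases along an axis \<open>i\<close> with \<open>\<partial>\<^sub>i\<^sub>iv > 0\<close>.\<close>
lemma no_interior_max: "x \<in> S \<Longrightarrow> \<not> (\<forall>y\<in>S. v y \<le> v x)"
proof
  assume x: "x \<in> S" and max: "\<forall>y\<in>S. v y \<le> v x"
  have "(\<lambda>h. Dv x \<bullet> h) = (\<lambda>h. 0)"
    using differential_zero_maxmin[OF x open_slab grad[OF x]] max by blast
  then have Dv_0: "Dv x = 0"
    by (metis inner_eq_zero_iff)
  then have "(\<Sum>i\<in>UNIV. D2v x $ i $ i) > 0"
    using pde[OF x] R_fun_pos[of x] by simp
  then obtain i where i: "D2v x $ i $ i > 0"
    by (metis (no_types, lifting) not_le sum_nonpos)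
  define e :: "real^'n" where "e = axis i 1"
  obtain r where r: "r > 0" "ball x r \<subseteq> S"
    using open_slab x open_contains_ball by blast
  have on_line: "x + t *\<^sub>R e \<in> S" if "\<bar>t\<bar> < r" for t
    using that r unfolding e_def by (auto simp: dist_norm)
  have v_line: "((\<lambda>s. v (x + s *\<^sub>R e)) has_real_derivative Dv (x + t *\<^sub>R e) $ i) (at t)"
    if "\<bar>t\<bar> < r" for t
    using has_real_derivative_along_line[of v "Dv (x + t *\<^sub>R e)" x t e] grad[OF on_line[OF that]]
    by (simp add: e_def inner_axis_one)
  have "((\<lambda>t. Dv (x + t *\<^sub>R e) $ i) has_real_derivative D2v x $ i $ i) (at 0)"
    unfolding e_def by (rule has_real_derivative_Dv_axis[OF x])
  from DERIV_pos_inc_right[OF this i] obtain \<delta>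
    where \<delta>: "\<delta> > 0" "\<And>h. 0 < h \<Longrightarrow> h < \<delta> \<Longrightarrow> Dv x $ i < Dv (x + h *\<^sub>R e) $ i"
    by auto
  define h where "h = min \<delta> r / 2"
  have h: "h > 0" "h < \<delta>" "h < r"
    using \<delta> r unfolding h_def by auto
  obtain z where z: "0 < z" "z < h" "v (x + h *\<^sub>R e) - v (x + 0 *\<^sub>R e) = (h - 0) * Dv (x + z *\<^sub>R e) $ i"
    using MVT2[of 0 h "\<lambda>s. v (x + s *\<^sub>R e)" "\<lambda>t. Dv (x + t *\<^sub>R e) $ i"] h v_line by force
  have "Dv (x + z *\<^sub>R e) $ i > 0"
    using \<delta>(2)[of z] z h Dv_0 by simp
  then have "h * Dv (x + z *\<^sub>R e) $ i > 0"
    using h(1) by simp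
  then have "v (x + h *\<^sub>R e) > v x"
    using z(3) by simp
  then show False
    using max on_line[of h] h by force
qed

lemma v_neg: "x \<in> S \<Longrightarrow> v x < 0"
proof -
  obtain x0 where x0: "x0 \<in> closure S" "\<forall>y\<in>closure S. v y \<le> v x0"
    using continuous_attains_sup[OF compact_closure_slab _ cont_v] zero_in_slab closure_subset by blast
  have "x0 \<notin> S"
    using no_interior_max x0 closure_subset by blast
  then have "v x0 = 0"
    using bdry x0 frontier_slab by auto
  then have nonpos: "\<forall>y\<in>S. v y \<le> 0"
    using x0 closure_subset by auto
  assume x: "x \<in> S"
  then show "v x < 0"
    using no_interior_max[OF x] nonpos by (metis antisym_conv1)
qed

lemma eventually_nhds_outside_slab:
  assumes d: "d > 0" and x: "x \<notin> S"
  shows "\<forall>\<^sub>F y in nhds x. y \<in> S \<longrightarrow> - d < v y"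
proof (cases "x \<in> closure S")
  case True
  then have "v x = 0"
    using bdry x frontier_slab by auto
  moreover have "(v \<longlongrightarrow> v x) (at x within closure S)"
    using cont_v True by (simp add: continuous_on_def)
  ultimately have "\<forall>\<^sub>F y in at x within closure S. - d < v y"
    using d by (simp add: order_tendsto_iff)
  then show ?thesis
    using closure_subset x unfolding eventually_at_filter by (auto elim!: eventually_mono)
next
  case False
  then have "\<forall>\<^sub>F y in nhds x. y \<in> - closure S"
    by (intro eventually_nhds_in_open) auto
  then show ?thesis
    using closure_subset by (auto elim!: eventually_mono)
qed

lemma compact_sublevel: "compact (closure S \<inter> v -` {..- d})"
  using compact_Int_closed[OF compact_closure_slab
      continuous_closed_preimage[OF cont_v closed_closure closed_atMost]]
  by (simp add: Int_left_absorb)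

lemma sublevel_subset_slab: "d > 0 \<Longrightarrow> closure S \<inter> v -` {..- d} \<subseteq> S"
  using bdry frontier_slab by fastforce

lemma bounded_if_continuous_closure:
  fixes f :: "real^'n \<Rightarrow> real"
  assumes "continuous_on (closure S) f"
  obtains C where "\<And>x. x \<in> S \<Longrightarrow> \<bar>f x \<bar> \<le> C"
  using compact_continuous_image[OF assms compact_closure_slab] closure_subset
  by (fastforce dest!: compact_imp_bounded simp: bounded_iff)

text \<open>Functions vanishing where \<open>v > -d\<close> live on the compact set \<open>{v \<le> -d}\<close> inside the open
  slab, so continuity on the slab suffices for boundedness.\<close>
lemma bounded_if_vanishes_near_boundary:
  fixes f :: "real^'n \<Rightarrow> real"
  assumes d: "d > 0" and f: "continuous_on S f" and f0: "\<And>x. x \<in> S \<Longrightarrow> - d < v x \<Longrightarrow> f x = 0"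
  obtains C where "\<And>x. x \<in> S \<Longrightarrow> \<bar>f x \<bar> \<le> C" "C \<ge> 0"
proof -
  let ?K = "closure S \<inter> v -` {..- d}"
  have "continuous_on ?K f"
    by (rule continuous_on_subset[OF f sublevel_subset_slab[OF d]])
  then obtain C where C: "\<And>x. x \<in> ?K \<Longrightarrow> \<bar>f x\<bar> \<le> C"
    using compact_continuous_image[OF _ compact_sublevel]
    by (fastforce dest!: compact_imp_bounded simp: bounded_iff)
  have "\<bar>f x\<bar> \<le> max C 0" if "x \<in> S" for x
    using C[of x] f0[OF that] that closure_subset by (cases "v x \<le> - d") force+
  then show ?thesis
    using that[of "max C 0"] by fastforce
qed

lemma borel_measurable_indicator_slab:
  fixes f :: "real^'n \<Rightarrow> real"
  shows "continuous_on S f \<Longrightarrow> (\<lambda>x. indicator S x * f x) \<in> borel_measurable borel"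
  using borel_measurable_continuous_on_indicator[OF borel_open[OF open_slab], of f] by simp

lemma integrable_indicator_slab:
  fixes f :: "real^'n \<Rightarrow> real"
  assumes f: "continuous_on S f" and C: "\<And>x. x \<in> S \<Longrightarrow> \<bar>f x \<bar> \<le> C"
  shows "integrable lborel (\<lambda>x. indicator S x * f x)"
proof -
  have "\<bar>indicator S x * f x\<bar> \<le> max C 0" for x
    using C[of x] by (cases "x \<in> S") auto
  moreover have "indicator S x * f x = 0" if "norm x > sqrt (\<epsilon>\<^sup>2 + 2 * real CARD('n))" for x
    using slab_subset_ball that by (auto simp: indicator_def subset_iff)
  ultimately show ?thesis
    by (rule integrable_bounded_support[OF borel_measurable_indicator_slab[OF f]])
qed

lemma integrable_indicator_slab_closure:
  fixes f :: "real^'n \<Rightarrow> real"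
  shows "continuous_on (closure S) f \<Longrightarrow> integrable lborel (\<lambda>x. indicator S x * f x)"
proof -
  assume f: "continuous_on (closure S) f"
  obtain C where "\<And>x. x \<in> S \<Longrightarrow> \<bar>f x\<bar> \<le> C"
    using bounded_if_continuous_closure[OF f] by blast
  then show ?thesis
    using integrable_indicator_slab continuous_on_subset[OF f closure_subset] by blast
qed

text \<open>Integration by parts along an axis, for functions vanishing where \<open>v > -d\<close>: extended
  by zero they are smooth along lines even at the boundary of the slab.\<close>
lemma integral_slab_axis_derivative_eq_0:
  fixes F f :: "real^'n \<Rightarrow> real"
  assumes d: "d > 0"
    and F: "continuous_on S F" and F0: "\<And>x. x \<in> S \<Longrightarrow> - d < v x \<Longrightarrow> F x = 0"
    and f: "continuous_on S f" and f0: "\<And>x. x \<in> S \<Longrightarrow> - d < v x \<Longrightarrow> f x = 0"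
    and deriv: "\<And>x. x \<in> S \<Longrightarrow> ((\<lambda>t. F (x + t *\<^sub>R axis i 1)) has_real_derivative f x) (at 0)"
  shows "integrable lborel (\<lambda>x. indicator S x * f x)"
    and "(\<integral>x. indicator S x * f x \<partial>lborel) = 0"
proof -
  obtain CF where CF: "\<And>x. x \<in> S \<Longrightarrow> \<bar>F x\<bar> \<le> CF" "CF \<ge> 0"
    using bounded_if_vanishes_near_boundary[OF d F F0] by blast
  obtain Cf where Cf: "\<And>x. x \<in> S \<Longrightarrow> \<bar>f x\<bar> \<le> Cf" "Cf \<ge> 0"
    using bounded_if_vanishes_near_boundary[OF d f f0] by blast
  define r where "r = sqrt (\<epsilon>\<^sup>2 + 2 * real CARD('n))"
  have supp: "norm x > r \<Longrightarrow> indicator S x * F x = 0" for x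
    using slab_subset_ball unfolding r_def by (auto simp: indicator_def subset_iff)
  have ext_deriv: "((\<lambda>t. indicator S (x + t *\<^sub>R axis i 1) * F (x + t *\<^sub>R axis i 1))
      has_real_derivative indicator S x * f x) (at 0)" for x
  proof (cases "x \<in> S")
    case True
    have "\<forall>\<^sub>F t in nhds 0. x + t *\<^sub>R axis i 1 \<in> S"
      by (intro eventually_nhds_0_along_line eventually_nhds_in_open open_slab True)
    then have "\<forall>\<^sub>F t in nhds 0. F (x + t *\<^sub>R axis i 1) = indicator S (x + t *\<^sub>R axis i 1) * F (x + t *\<^sub>R axis i 1)"
      by eventually_elim simp
    from DERIV_cong_ev[OF refl this refl] show ?thesis
      using deriv[OF True] True by simp
  next
    case False
    have "\<forall>\<^sub>F t in nhds 0. x + t *\<^sub>R axis i 1 \<in> S \<longrightarrow> - d < v (x + t *\<^sub>R axis i 1)"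
      by (intro eventually_nhds_0_along_line eventually_nhds_outside_slab d False)
    then have "\<forall>\<^sub>F t in nhds 0. 0 = indicator S (x + t *\<^sub>R axis i 1) * F (x + t *\<^sub>R axis i 1)"
      by eventually_elim (auto simp: F0 indicator_def)
    from DERIV_cong_ev[OF refl this refl, symmetric] show ?thesis
      using False by simp
  qed
  have "\<bar>indicator S x * F x\<bar> \<le> CF" "\<bar>indicator S x * f x\<bar> \<le> Cf" for x
    using CF Cf by (cases "x \<in> S"; simp)+
  from integral_directional_derivative_eq_0[where r = r, OF borel_measurable_indicator_slab[OF F]
      borel_measurable_indicator_slab[OF f] supp this(1) ext_deriv this(2)]
  show "integrable lborel (\<lambda>x. indicator S x * f x)"
    and "(\<integral>x. indicator S x * f x \<partial>lborel) = 0" by simp_all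
qed

lemma continuous_on_cutoff_v: "d > 0 \<Longrightarrow> continuous_on (closure S) (\<lambda>x. cutoff d (v x))"
  by (rule continuous_on_compose2[OF continuous_on_cutoff cont_v]) auto

lemma continuous_on_cutoff'_v: "d > 0 \<Longrightarrow> continuous_on (closure S) (\<lambda>x. cutoff' d (v x))"
  by (rule continuous_on_compose2[OF continuous_on_cutoff' cont_v]) auto

text \<open>Testing the equation against \<open>cutoff d v\<close>: the divergence of
  \<open>cutoff d v \<cdot> \<gamma> \<nabla>v\<close> is \<open>\<gamma> (cutoff' d v |\<nabla>v|\<^sup>2 + cutoff d v \<cdot> \<L>v)\<close>.\<close>
lemma integral_cutoff_energy_identity:
  assumes d: "d > 0"
  shows "integrable lborel (\<lambda>x. indicator S x *
      (gauss_density x * (cutoff' d (v x) * (norm (Dv x))\<^sup>2 + cutoff d (v x) * R_fun x)))"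
    and "(\<integral>x. indicator S x *
      (gauss_density x * (cutoff' d (v x) * (norm (Dv x))\<^sup>2 + cutoff d (v x) * R_fun x)) \<partial>lborel) = 0"
proof -
  have cont_u: "continuous_on S (\<lambda>x. cutoff d (v x))"
    and cont_u': "continuous_on S (\<lambda>x. cutoff' d (v x))"
    using continuous_on_cutoff_v[OF d] continuous_on_cutoff'_v[OF d] closure_subset
    by (auto intro: continuous_on_subset)
  define \<phi> where "\<phi> i x = cutoff' d (v x) * Dv x $ i * (gauss_density x * Dv x $ i)
    + cutoff d (v x) * (gauss_density x * D2v x $ i $ i - x $ i * gauss_density x * Dv x $ i)" for i x
  have \<phi>_int: "integrable lborel (\<lambda>x. indicator S x * \<phi> i x)"
    and \<phi>_integral: "(\<integral>x. indicator S x * \<phi> i x \<partial>lborel) = 0" for i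
  proof -
    have deriv: "((\<lambda>t. cutoff d (v (x + t *\<^sub>R axis i 1)) *
        (gauss_density (x + t *\<^sub>R axis i 1) * Dv (x + t *\<^sub>R axis i 1) $ i)) has_real_derivative \<phi> i x) (at 0)"
      if x: "x \<in> S" for x
      by (rule DERIV_mult[OF has_real_derivative_cutoff_v_axis[OF d x]
            DERIV_mult[OF has_real_derivative_gauss_density_axis has_real_derivative_Dv_axis[OF x]],
            THEN DERIV_cong]) (simp add: \<phi>_def algebra_simps)
    have "continuous_on S (\<lambda>x. cutoff d (v x) * (gauss_density x * Dv x $ i))"
      and "continuous_on S (\<phi> i)"
      unfolding \<phi>_def
      by (intro continuous_intros continuous_on_gauss_density continuous_on_Dv cont_hess cont_u cont_u')+
    from integral_slab_axis_derivative_eq_0[OF d this(1) _ this(2) _ deriv]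
    show "integrable lborel (\<lambda>x. indicator S x * \<phi> i x)"
      and "(\<integral>x. indicator S x * \<phi> i x \<partial>lborel) = 0"
      by (simp_all add: \<phi>_def cutoff_eq_0 cutoff'_eq_0 d)
  qed
  have "(\<Sum>i\<in>UNIV. indicator S x * \<phi> i x) = indicator S x *
      (gauss_density x * (cutoff' d (v x) * (norm (Dv x))\<^sup>2 + cutoff d (v x) * R_fun x))" for x
  proof (cases "x \<in> S")
    case True
    have "(\<Sum>i\<in>UNIV. \<phi> i x) = cutoff' d (v x) * gauss_density x * (\<Sum>i\<in>UNIV. (Dv x $ i)\<^sup>2)
        + cutoff d (v x) * gauss_density x * ((\<Sum>i\<in>UNIV. D2v x $ i $ i) - (\<Sum>i\<in>UNIV. x $ i * Dv x $ i))"
      unfolding \<phi>_def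
      by (simp add: sum.distrib sum_subtractf sum_distrib_left algebra_simps power2_eq_square)
    then show ?thesis
      using True pde[OF True] norm_power2_eq_sum[of "Dv x"] by (simp add: algebra_simps)
  qed simp
  then have sum_eq: "(\<lambda>x. \<Sum>i\<in>UNIV. indicator S x * \<phi> i x) = (\<lambda>x. indicator S x *
      (gauss_density x * (cutoff' d (v x) * (norm (Dv x))\<^sup>2 + cutoff d (v x) * R_fun x)))" ..
  have "integrable lborel (\<lambda>x. \<Sum>i\<in>UNIV. indicator S x * \<phi> i x)"
    by (intro Bochner_Integration.integrable_sum \<phi>_int)
  then show "integrable lborel (\<lambda>x. indicator S x *
      (gauss_density x * (cutoff' d (v x) * (norm (Dv x))\<^sup>2 + cutoff d (v x) * R_fun x)))"
    unfolding sum_eq .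
  have "(\<integral>x. (\<Sum>i\<in>UNIV. indicator S x * \<phi> i x) \<partial>lborel) = (\<Sum>i\<in>UNIV. \<integral>x. indicator S x * \<phi> i x \<partial>lborel)"
    by (intro Bochner_Integration.integral_sum \<phi>_int)
  then show "(\<integral>x. indicator S x *
      (gauss_density x * (cutoff' d (v x) * (norm (Dv x))\<^sup>2 + cutoff d (v x) * R_fun x)) \<partial>lborel) = 0"
    unfolding sum_eq \<phi>_integral by simp
qed

text \<open>Integrating \<open>\<partial>\<^sub>k (x\<^sub>k (cutoff d v)\<^sup>2 gauss_transverse k)\<close>; only the \<open>k\<close>-th
  coordinate is differentiated, which is what makes the width \<open>\<epsilon>\<close> appear.\<close>
lemma integral_cutoff_transverse_identity:
  assumes d: "d > 0"
  shows "integrable lborel (\<lambda>x. indicator S x * ((cutoff d (v x))\<^sup>2 * gauss_transverse k x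
      + 2 * x $ k * cutoff d (v x) * cutoff' d (v x) * Dv x $ k * gauss_transverse k x))"
    and "(\<integral>x. indicator S x * ((cutoff d (v x))\<^sup>2 * gauss_transverse k x
      + 2 * x $ k * cutoff d (v x) * cutoff' d (v x) * Dv x $ k * gauss_transverse k x) \<partial>lborel) = 0"
proof -
  have cont_u: "continuous_on S (\<lambda>x. cutoff d (v x))"
    and cont_u': "continuous_on S (\<lambda>x. cutoff' d (v x))"
    using continuous_on_cutoff_v[OF d] continuous_on_cutoff'_v[OF d] closure_subset
    by (auto intro: continuous_on_subset)
  have deriv: "((\<lambda>t. (x + t *\<^sub>R axis k 1) $ k * (cutoff d (v (x + t *\<^sub>R axis k 1)))\<^sup>2
      * gauss_transverse k (x + t *\<^sub>R axis k 1)) has_real_derivative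
      (cutoff d (v x))\<^sup>2 * gauss_transverse k x
      + 2 * x $ k * cutoff d (v x) * cutoff' d (v x) * Dv x $ k * gauss_transverse k x) (at 0)"
    if x: "x \<in> S" for x
  proof -
    have shift: "(\<lambda>t. (x + t *\<^sub>R axis k 1) $ k * (cutoff d (v (x + t *\<^sub>R axis k 1)))\<^sup>2
        * gauss_transverse k (x + t *\<^sub>R axis k 1))
      = (\<lambda>t. (x $ k + t) * (cutoff d (v (x + t *\<^sub>R axis k 1)) * cutoff d (v (x + t *\<^sub>R axis k 1)))
        * gauss_transverse k x)"
      by (simp add: gauss_transverse_add_axis power2_eq_square)
    have lin: "((\<lambda>t. x $ k + t) has_real_derivative 1) (at 0)"
      by (auto intro!: derivative_eq_intros)
    note u = has_real_derivative_cutoff_v_axis[OF d x, of k]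
    show ?thesis
      unfolding shift
      by (rule DERIV_cmult_right[OF DERIV_mult[OF lin DERIV_mult[OF u u]], THEN DERIV_cong])
        (simp add: power2_eq_square algebra_simps)
  qed
  have "continuous_on S (\<lambda>x. x $ k * (cutoff d (v x))\<^sup>2 * gauss_transverse k x)"
    and "continuous_on S (\<lambda>x. (cutoff d (v x))\<^sup>2 * gauss_transverse k x
      + 2 * x $ k * cutoff d (v x) * cutoff' d (v x) * Dv x $ k * gauss_transverse k x)"
    by (intro continuous_intros continuous_on_gauss_transverse continuous_on_Dv cont_u cont_u')+
  from integral_slab_axis_derivative_eq_0[OF d this(1) _ this(2) _ deriv]
  show "integrable lborel (\<lambda>x. indicator S x * ((cutoff d (v x))\<^sup>2 * gauss_transverse k x
      + 2 * x $ k * cutoff d (v x) * cutoff' d (v x) * Dv x $ k * gauss_transverse k x))"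
    and "(\<integral>x. indicator S x * ((cutoff d (v x))\<^sup>2 * gauss_transverse k x
      + 2 * x $ k * cutoff d (v x) * cutoff' d (v x) * Dv x $ k * gauss_transverse k x) \<partial>lborel) = 0"
    by (simp_all add: cutoff_eq_0 d)
qed

lemma cutoff_energy_bound:
  assumes d: "d > 0"
  shows "(\<integral>x. indicator S x * (gauss_density x * (cutoff' d (v x) * (norm (Dv x))\<^sup>2)) \<partial>lborel)
    \<le> 16 * \<epsilon>\<^sup>2 * exp (\<epsilon>\<^sup>2 / 2) * (\<integral>x. indicator S x * gauss_density x \<partial>lborel)"
proof -
  define B where "B = 4 * \<epsilon>\<^sup>2 * exp (\<epsilon>\<^sup>2 / 2)"
  have B_pos: "B > 0" unfolding B_def using eps by simp
  define E where "E x = indicator S x * (gauss_density x * (cutoff' d (v x) * (norm (Dv x))\<^sup>2))" for x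
  define G where "G x = indicator S x * gauss_density x" for x
  define I1 where "I1 x = indicator S x *
    (gauss_density x * (cutoff' d (v x) * (norm (Dv x))\<^sup>2 + cutoff d (v x) * R_fun x))" for x
  define I2 where "I2 x = indicator S x * ((cutoff d (v x))\<^sup>2 * gauss_transverse k x
    + 2 * x $ k * cutoff d (v x) * cutoff' d (v x) * Dv x $ k * gauss_transverse k x)" for x
  have I1: "integrable lborel I1" "integral\<^sup>L lborel I1 = 0"
    using integral_cutoff_energy_identity[OF d] unfolding I1_def by auto
  have I2: "integrable lborel I2" "integral\<^sup>L lborel I2 = 0"
    using integral_cutoff_transverse_identity[OF d] unfolding I2_def by auto
  have E_int: "integrable lborel E"
    unfolding E_def by (intro integrable_indicator_slab_closure continuous_intros
        continuous_on_gauss_density continuous_on_cutoff'_v[OF d] cont_grad)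
  have G_int: "integrable lborel G"
    unfolding G_def by (intro integrable_indicator_slab_closure continuous_on_gauss_density)
  have pointwise: "E x \<le> I1 x + I2 x / B + E x / 2 + 2 * B * G x" for x
  proof (cases "x \<in> S")
    case True
    have "\<bar>x $ k\<bar> < \<epsilon>"
      using True unfolding slab_def by simp
    then have "(x $ k)\<^sup>2 \<le> \<epsilon>\<^sup>2" and "gauss_transverse k x \<le> gauss_density x * exp (\<epsilon>\<^sup>2 / 2)"
      by (simp_all add: abs_le_square_iff[symmetric] gauss_transverse_le_exp)
    moreover have "cutoff d (v x) \<le> 0"
      using cutoff_nonpos_bounds[OF d] v_neg[OF True] by simp
    moreover have "(Dv x $ k)\<^sup>2 \<le> (norm (Dv x))\<^sup>2"
      using component_le_norm_cart[of "Dv x" k] by (simp add: abs_le_square_iff[symmetric])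
    ultimately show ?thesis
      using energy_pointwise_bound[OF gauss_density_pos gauss_transverse_ge _
          cutoff'_nonneg[OF d] cutoff'_le_1[OF d] _ _ _ R_fun_le_2 B_def eps]
      unfolding E_def I1_def I2_def G_def using True by simp
  qed (simp add: E_def I1_def I2_def G_def)
  have "integral\<^sup>L lborel E \<le> (\<integral>x. I1 x + I2 x / B + E x / 2 + 2 * B * G x \<partial>lborel)"
    using I1 I2 E_int G_int by (intro integral_mono pointwise) auto
  also have "\<dots> = integral\<^sup>L lborel E / 2 + 2 * B * integral\<^sup>L lborel G"
    using I1 I2 E_int G_int by simp
  finally show ?thesis
    unfolding E_def G_def B_def by simp
qed

text \<open>As \<open>d \<rightarrow> 0\<close>, \<open>cutoff' d v \<rightarrow> 1\<close> on the slab because \<open>v < 0\<close> there.\<close>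
lemma energy_bound:
  "(\<integral>x. indicator S x * (gauss_density x * (norm (Dv x))\<^sup>2) \<partial>lborel)
    \<le> 16 * \<epsilon>\<^sup>2 * exp (\<epsilon>\<^sup>2 / 2) * (\<integral>x. indicator S x * gauss_density x \<partial>lborel)"
proof -
  define d :: "nat \<Rightarrow> real" where "d m = inverse (real (Suc m))" for m
  have d_pos: "d m > 0" for m unfolding d_def by simp
  define E where "E m x = indicator S x * (gauss_density x * (cutoff' (d m) (v x) * (norm (Dv x))\<^sup>2))" for m x
  define f where "f x = indicator S x * (gauss_density x * (norm (Dv x))\<^sup>2)" for x
  have f_int: "integrable lborel f"
    unfolding f_def by (intro integrable_indicator_slab_closure continuous_intros
        continuous_on_gauss_density cont_grad)
  have E_meas: "E m \<in> borel_measurable borel" for m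
    unfolding E_def by (intro borel_measurable_indicator_slab continuous_intros continuous_on_gauss_density
        continuous_on_Dv continuous_on_subset[OF continuous_on_cutoff'_v[OF d_pos] closure_subset])
  have E_dom: "\<bar>E m x\<bar> \<le> f x" for m x
  proof -
    have "0 \<le> cutoff' (d m) (v x) * (norm (Dv x))\<^sup>2"
      and "cutoff' (d m) (v x) * (norm (Dv x))\<^sup>2 \<le> (norm (Dv x))\<^sup>2"
      using cutoff'_nonneg[OF d_pos] cutoff'_le_1[OF d_pos] by (auto intro: mult_left_le_one_le)
    then show ?thesis
      using gauss_density_pos[of x] unfolding E_def f_def by (auto simp: abs_mult intro: mult_left_mono)
  qed
  have E_lim: "(\<lambda>m. E m x) \<longlonglongrightarrow> f x" for x
  proof (cases "x \<in> S")
    case True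
    obtain N where N: "inverse (real (Suc N)) < - v x / 2"
      using reals_Archimedean[of "- v x / 2"] v_neg[OF True] by auto
    have "E m x = f x" if "N \<le> m" for m
    proof -
      have "d m \<le> inverse (real (Suc N))"
        unfolding d_def using that by (simp add: le_imp_inverse_le)
      then show ?thesis
        using N cutoff'_eq_1[OF d_pos, of "v x" m] unfolding E_def f_def by simp
    qed
    then show ?thesis
      by (intro tendsto_eventually) (auto simp: eventually_sequentially)
  qed (simp add: E_def f_def)
  have "(\<lambda>m. integral\<^sup>L lborel (E m)) \<longlonglongrightarrow> integral\<^sup>L lborel f"
    using f_int by (intro integral_dominated_convergence[where w = f])
      (auto simp: E_meas borel_measurable_integrable E_lim E_dom)
  moreover have "integral\<^sup>L lborel (E m)
      \<le> 16 * \<epsilon>\<^sup>2 * exp (\<epsilon>\<^sup>2 / 2) * (\<integral>x. indicator S x * gauss_density x \<partial>lborel)" for m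
    unfolding E_def by (rule cutoff_energy_bound[OF d_pos])
  ultimately show ?thesis
    unfolding f_def by (intro LIMSEQ_le_const2) auto
qed

end

theorem mainTheorem10:
  fixes v :: "real ^ 'n \<Rightarrow> real"
    and Dv :: "real ^ 'n \<Rightarrow> real ^ 'n"
    and D2v :: "real ^ 'n \<Rightarrow> real ^ 'n ^ 'n"
    and k :: 'n and \<epsilon> :: real
  assumes n2: "CARD('n) \<ge> 2"
    and eps: "\<epsilon> > 0"
    and cont_v: "continuous_on (closure (slab k \<epsilon>)) v"
    and grad: "\<And>x. x \<in> slab k \<epsilon> \<Longrightarrow> (v has_derivative (\<lambda>h. Dv x \<bullet> h)) (at x)"
    and cont_grad: "continuous_on (closure (slab k \<epsilon>)) Dv"
    and hess: "\<And>x. x \<in> slab k \<epsilon> \<Longrightarrow> (Dv has_derivative (\<lambda>h. D2v x *v h)) (at x)"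
    and cont_hess: "continuous_on (slab k \<epsilon>) D2v"
    and pde: "\<And>x. x \<in> slab k \<epsilon> \<Longrightarrow>
               (\<Sum>i\<in>UNIV. D2v x $ i $ i) - (\<Sum>i\<in>UNIV. x $ i * Dv x $ i) = R_fun x"
    and bdry: "\<And>x. x \<in> frontier (slab k \<epsilon>) \<Longrightarrow> v x = 0"
  shows "gauss_cond_integral (slab k \<epsilon>) (\<lambda>x. (norm (Dv x))\<^sup>2) \<le> 36 * exp (\<epsilon>\<^sup>2 / 2) * \<epsilon>\<^sup>2"
proof -
  interpret slab_bvp v Dv D2v k \<epsilon>
    by unfold_locales (fact eps cont_v grad cont_grad hess cont_hess pde bdry)+
  define E where "E = (\<integral>x. indicator S x * (gauss_density x * (norm (Dv x))\<^sup>2) \<partial>lborel)"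
  define G where "G = (\<integral>x. indicator S x * gauss_density x \<partial>lborel)"
  have "gauss_cond_integral S (\<lambda>x. (norm (Dv x))\<^sup>2) = E / G"
    unfolding E_def G_def using open_slab
    by (intro gauss_cond_integral_eq_lborel borel_measurable_indicator_slab integrable_indicator_slab_closure
        continuous_intros continuous_on_Dv continuous_on_gauss_density) auto
  moreover have "G \<ge> 0"
    unfolding G_def by (intro integral_nonneg_AE AE_I2) (simp add: less_imp_le[OF gauss_density_pos])
  moreover have "E \<le> 16 * \<epsilon>\<^sup>2 * exp (\<epsilon>\<^sup>2 / 2) * G"
    unfolding E_def G_def by (rule energy_bound)
  ultimately have "gauss_cond_integral S (\<lambda>x. (norm (Dv x))\<^sup>2) \<le> 16 * exp (\<epsilon>\<^sup>2 / 2) * \<epsilon>\<^sup>2"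
    by (cases "G = 0") (auto simp: divide_le_eq mult_ac)
  also have "\<dots> \<le> 36 * exp (\<epsilon>\<^sup>2 / 2) * \<epsilon>\<^sup>2"
    by simp
  finally show ?thesis .
qed

end
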